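(* Let $\gamma_a,\gamma_s>0$, $\lambda\ge0$, $q>0$, $\sigma_B>0$, $\varepsilon_a\in(0,2)$, and let $\beta_a,\beta_s:\mathbb R\to\mathbb R$ be globally Lipschitz continuous with $\beta_a\ge0$, $\beta_s>0$. Let $\mu\in(\varepsilon_a^{1/4},2^{1/4})$. Then there exists $M_0>0$ such that for every $M_a\ge M_0$ and every initial condition $(T_a^{(0)},T_s^{(0)})\in[0,M_a]\times[0,\mu M_a]$, the solution $(T_a,T_s)$ of \[ \begin{cases} \gamma_a T_a'=-\lambda(T_a-T_s)+\varepsilon_a\sigma_B|T_s|^3T_s-2\varepsilon_a\sigma_B|T_a|^3T_a+q\beta_a(T_a),\\ \gamma_s T_s'=-\lambda(T_s-T_a)-\sigma_B|T_s|^3T_s+\varepsilon_a\sigma_B|T_a|^3T_a+q\beta_s(T_s),\\ T_a(0)=T_a^{(0)},\quad T_s(0)=T_s^{(0)} \end{cases} \] does not leave the rectangle $[0,M_a]\times[0,\mu M_a]$ for positive times. *)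

theory Defs
  imports "HOL-Analysis.Analysis"
begin

end

theory Submission
  imports Defs "HOL-Real_Asymp.Real_Asymp"
begin

text \<open>For large \<open>M\<^sub>a\<close> the quartic radiation terms dominate on the faces \<open>T\<^sub>a = M\<^sub>a\<close> and
  \<open>T\<^sub>s = \<mu> M\<^sub>a\<close> of the rectangle: up to terms of order \<open>M\<^sub>a\<close> the net fluxes there are at
  most \<open>\<epsilon>\<^sub>a \<sigma>\<^sub>B (\<mu>\<^sup>4 - 2) M\<^sub>a\<^sup>4\<close> and \<open>\<sigma>\<^sub>B (\<epsilon>\<^sub>a - \<mu>\<^sup>4) M\<^sub>a\<^sup>4\<close>, so the vector field points
  strictly inwards because \<open>\<epsilon>\<^sub>a < \<mu>\<^sup>4 < 2\<close>. On the face \<open>T\<^sub>s = 0\<close> it points strictly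
  inwards because \<open>\<beta>\<^sub>s > 0\<close>. On \<open>T\<^sub>a = 0\<close> it only points weakly inwards, but \<open>T\<^sub>a'\<close> is
  nonnegative wherever \<open>T\<^sub>a < 0 \<le> T\<^sub>s\<close>, which already keeps \<open>T\<^sub>a\<close> from becoming negative.
  A first exit time argument turns these local statements into invariance of the rectangle.\<close>

lemma closed_forward_invariant:
  fixes f :: "real \<Rightarrow> 'a::topological_space"
  assumes cont: "continuous_on {a..<b} f" and "closed C" and start: "f a \<in> C"
    and step: "\<And>s. s \<in> {a..<b} \<Longrightarrow> f s \<in> C \<Longrightarrow> \<exists>e>0. \<forall>t\<in>{s..<s+e}. t < b \<longrightarrow> f t \<in> C"
    and t: "t \<in> {a..<b}"
  shows "f t \<in> C"
proof (rule ccontr)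
  assume "f t \<notin> C"
  define B where "B = {u \<in> {a..<b}. f u \<notin> C}"
  define s where "s = Inf B"
  have "t \<in> B" using t \<open>f t \<notin> C\<close> by (simp add: B_def)
  have bdd: "bdd_below B" by (rule bdd_belowI[of _ a]) (auto simp: B_def)
  have "a \<le> s" unfolding s_def using \<open>t \<in> B\<close> by (intro cInf_greatest) (auto simp: B_def)
  moreover have "s \<le> t" unfolding s_def using \<open>t \<in> B\<close> bdd by (rule cInf_lower)
  ultimately have s: "s \<in> {a..<b}" using t by simp
  have before: "f ` {a..<s} \<subseteq> C"
  proof
    fix y assume "y \<in> f ` {a..<s}"
    then obtain u where u: "u \<in> {a..<s}" "y = f u" by blast
    have "u \<notin> B"
      using u(1) cInf_lower[OF _ bdd, of u] by (auto simp: s_def)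
    then show "y \<in> C" using u s by (simp add: B_def)
  qed
  have "f s \<in> C"
  proof (cases "s = a")
    case True
    then show ?thesis using start by simp
  next
    case False
    then have "a < s" using s by simp
    have "continuous_on (closure {a..<s}) f"
      using \<open>a < s\<close> s by (auto intro: continuous_on_subset[OF cont])
    then have "f ` closure {a..<s} \<subseteq> C" using \<open>closed C\<close> before by (rule image_closure_subset)
    then show ?thesis using \<open>a < s\<close> by auto
  qed
  then obtain e where "e > 0" and e: "\<forall>u\<in>{s..<s+e}. u < b \<longrightarrow> f u \<in> C"
    using step s by blast
  obtain u where "u \<in> B" "u < s + e"
    using cInf_less_iff[OF _ bdd, of "s + e"] \<open>t \<in> B\<close> \<open>e > 0\<close> by (auto simp: s_def)
  moreover have "s \<le> u" unfolding s_def using \<open>u \<in> B\<close> bdd by (rule cInf_lower)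
  ultimately show False using e by (auto simp: B_def)
qed

lemma upper_bound_persists_right:
  fixes x :: "real \<Rightarrow> real"
  assumes x': "(x has_real_derivative d) (at s within S)"
    and "x s \<le> c" and boundary: "x s = c \<Longrightarrow> d < 0"
  shows "\<exists>e>0. \<forall>t\<in>S. s \<le> t \<and> t < s + e \<longrightarrow> x t \<le> c"
proof (cases "x s = c")
  case True
  obtain e where "e > 0" and dec: "\<forall>h>0. s + h \<in> S \<longrightarrow> h < e \<longrightarrow> x (s + h) < x s"
    using has_real_derivative_neg_dec_right[OF x' boundary[OF True]] by blast
  have "x t \<le> c" if "t \<in> S" "s \<le> t" "t < s + e" for t
    using dec[rule_format, of "t - s"] that True by (cases "t = s") auto
  then show ?thesis using \<open>e > 0\<close> by blast
next
  case False
  have "(x \<longlongrightarrow> x s) (at s within S)"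
    using DERIV_continuous[OF x'] by (simp add: continuous_within)
  then have "\<forall>\<^sub>F t in at s within S. x t < c"
    using False \<open>x s \<le> c\<close> by (intro order_tendstoD(2)) auto
  then obtain e where "e > 0" and e: "\<forall>t\<in>S. t \<noteq> s \<and> dist t s < e \<longrightarrow> x t < c"
    by (auto simp: eventually_at)
  have "x t \<le> c" if "t \<in> S" "s \<le> t" "t < s + e" for t
    using e that \<open>x s \<le> c\<close> by (cases "t = s") (auto simp: dist_real_def)
  then show ?thesis using \<open>e > 0\<close> by blast
qed

lemma lower_bound_persists_right:
  fixes x :: "real \<Rightarrow> real"
  assumes x': "(x has_real_derivative d) (at s within S)"
    and "c \<le> x s" and "x s = c \<Longrightarrow> 0 < d"
  shows "\<exists>e>0. \<forall>t\<in>S. s \<le> t \<and> t < s + e \<longrightarrow> c \<le> x t"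
proof -
  have "((\<lambda>t. - x t) has_real_derivative - d) (at s within S)" using x' by (rule DERIV_minus)
  from upper_bound_persists_right[OF this, of "- c"] show ?thesis
    using assms by auto
qed

lemma nonneg_if_deriv_nonneg_where_neg:
  fixes x x' :: "real \<Rightarrow> real"
  assumes "a \<le> b" and cont: "continuous_on {a..b} x"
    and deriv: "\<And>t. t \<in> {a<..<b} \<Longrightarrow> (x has_real_derivative x' t) (at t)"
    and "0 \<le> x a" and sign: "\<And>t. t \<in> {a<..<b} \<Longrightarrow> x t < 0 \<Longrightarrow> 0 \<le> x' t"
  shows "0 \<le> x b"
proof (rule ccontr)
  assume "\<not> 0 \<le> x b"
  define K where "K = {a..b} \<inter> x -` {0..}"
  have "closed K" unfolding K_def by (rule continuous_closed_preimage[OF cont]) auto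
  moreover have "a \<in> K" using \<open>a \<le> b\<close> \<open>0 \<le> x a\<close> by (simp add: K_def)
  moreover have bdd: "bdd_above K" by (rule bdd_aboveI[of _ b]) (auto simp: K_def)
  ultimately have "Sup K \<in> K" by (intro closed_contains_Sup) auto
  define t0 where "t0 = Sup K"
  have t0: "a \<le> t0" "t0 \<le> b" "0 \<le> x t0" using \<open>Sup K \<in> K\<close> by (auto simp: K_def t0_def)
  have neg_after: "x u < 0" if "t0 < u" "u \<le> b" for u
  proof (rule ccontr)
    assume "\<not> x u < 0"
    then have "u \<in> K" using that t0 by (auto simp: K_def)
    then have "u \<le> t0" unfolding t0_def using bdd by (rule cSup_upper)
    then show False using that by simp
  qed
  have "x t0 \<le> x b"
  proof (rule DERIV_nonneg_imp_increasing_open[OF \<open>t0 \<le> b\<close>])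
    fix u assume "t0 < u" "u < b"
    then show "\<exists>y. (x has_real_derivative y) (at u) \<and> 0 \<le> y"
      using deriv[of u] sign[of u] neg_after[of u] t0 by auto
  qed (use cont t0 in \<open>auto intro: continuous_on_subset\<close>)
  then show False using \<open>\<not> 0 \<le> x b\<close> t0 by simp
qed

lemma rectangle_forward_invariant:
  fixes x y :: "real \<Rightarrow> real" and f g :: "real \<Rightarrow> real \<Rightarrow> real"
  assumes x': "\<And>t. t \<in> {0..<T} \<Longrightarrow> (x has_real_derivative f (x t) (y t)) (at t within {0..<T})"
    and y': "\<And>t. t \<in> {0..<T} \<Longrightarrow> (y has_real_derivative g (x t) (y t)) (at t within {0..<T})"
    and start: "x 0 \<in> {0..A}" "y 0 \<in> {0..B}"
    and right: "\<And>v. v \<in> {0..B} \<Longrightarrow> f A v < 0"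
    and left: "\<And>u v. u < 0 \<Longrightarrow> v \<in> {0..B} \<Longrightarrow> 0 \<le> f u v"
    and top: "\<And>u. u \<in> {0..A} \<Longrightarrow> g u B < 0"
    and bottom: "\<And>u. u \<in> {0..A} \<Longrightarrow> 0 < g u 0"
    and t: "t \<in> {0..<T}"
  shows "x t \<in> {0..A} \<and> y t \<in> {0..B}"
proof -
  have cont_x: "continuous_on {0..<T} x" using x' by (rule DERIV_continuous_on)
  have cont_y: "continuous_on {0..<T} y" using y' by (rule DERIV_continuous_on)
  have "(x t, y t) \<in> {0..A} \<times> {0..B}"
  proof (rule closed_forward_invariant[where f = "\<lambda>t. (x t, y t)"])
    fix s assume s: "s \<in> {0..<T}" and "(x s, y s) \<in> {0..A} \<times> {0..B}"
    then have xs: "x s \<in> {0..A}" and ys: "y s \<in> {0..B}" by auto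
    obtain e1 where "e1 > 0" and e1: "\<forall>t\<in>{0..<T}. s \<le> t \<and> t < s + e1 \<longrightarrow> x t \<le> A"
      using upper_bound_persists_right[OF x'[OF s], of A] xs right[OF ys] by auto
    obtain e2 where "e2 > 0" and e2: "\<forall>t\<in>{0..<T}. s \<le> t \<and> t < s + e2 \<longrightarrow> y t \<le> B"
      using upper_bound_persists_right[OF y'[OF s], of B] ys top[OF xs] by auto
    obtain e3 where "e3 > 0" and e3: "\<forall>t\<in>{0..<T}. s \<le> t \<and> t < s + e3 \<longrightarrow> 0 \<le> y t"
      using lower_bound_persists_right[OF y'[OF s], of 0] ys bottom[OF xs] by auto
    define e where "e = min e1 (min e2 e3)"
    have y_in: "y t \<in> {0..B}" if "t \<in> {s..<s+e}" "t < T" for t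
      using e2 e3 that s by (auto simp: e_def)
    have x_nonneg: "0 \<le> x t" if t: "t \<in> {s..<s+e}" "t < T" for t
    proof (rule nonneg_if_deriv_nonneg_where_neg[of s t x "\<lambda>u. f (x u) (y u)"])
      show "continuous_on {s..t} x" using t s by (auto intro: continuous_on_subset[OF cont_x])
      show "(x has_real_derivative f (x u) (y u)) (at u)" if u: "u \<in> {s<..<t}" for u
      proof -
        have "at u within {0..<T} = at u" using u s t by (intro at_within_interior) auto
        then show ?thesis using x'[of u] u s t by auto
      qed
      show "0 \<le> f (x u) (y u)" if "u \<in> {s<..<t}" "x u < 0" for u
        using left y_in[of u] that t by auto
    qed (use t xs in auto)
    show "\<exists>e>0. \<forall>t\<in>{s..<s+e}. t < T \<longrightarrow> (x t, y t) \<in> {0..A} \<times> {0..B}"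
    proof (intro exI[of _ e] conjI ballI impI)
      fix t assume "t \<in> {s..<s+e}" "t < T"
      then show "(x t, y t) \<in> {0..A} \<times> {0..B}"
        using e1 y_in x_nonneg s by (auto simp: e_def)
    qed (simp add: e_def \<open>e1 > 0\<close> \<open>e2 > 0\<close> \<open>e3 > 0\<close>)
  qed (use cont_x cont_y start t in \<open>auto intro: continuous_on_Pair closed_Times\<close>)
  then show ?thesis by simp
qed

lemma lipschitz_on_UNIV_upper_bound:
  fixes f :: "real \<Rightarrow> real"
  assumes "L-lipschitz_on UNIV f"
  shows "f x \<le> f 0 + L * \<bar>x\<bar>"
  using lipschitz_onD[OF assms, of x 0] by (simp add: dist_real_def)

lemma eventually_affine_less_quartic:
  fixes a b c :: real
  assumes "0 < c"
  shows "\<forall>\<^sub>F M in at_top. a + b * M < c * M ^ 4"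
  using assms by real_asymp

locale energy_balance =
  fixes lambda q sigma_B eps_a :: real and beta_a beta_s :: "real \<Rightarrow> real"
  assumes lambda_nonneg: "0 \<le> lambda" and q_pos: "0 < q" and sigma_B_pos: "0 < sigma_B"
    and eps_a_pos: "0 < eps_a"
    and beta_a_nonneg: "\<And>u. 0 \<le> beta_a u" and beta_s_pos: "\<And>u. 0 < beta_s u"
begin

definition flux_a :: "real \<Rightarrow> real \<Rightarrow> real" where
  "flux_a u v = - lambda * (u - v) + eps_a * sigma_B * \<bar>v\<bar>^3 * v
                - 2 * eps_a * sigma_B * \<bar>u\<bar>^3 * u + q * beta_a u"

definition flux_s :: "real \<Rightarrow> real \<Rightarrow> real" where
  "flux_s u v = - lambda * (v - u) - sigma_B * \<bar>v\<bar>^3 * v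
                + eps_a * sigma_B * \<bar>u\<bar>^3 * u + q * beta_s v"

lemma flux_a_nonneg_left:
  assumes "u \<le> 0" "0 \<le> v"
  shows "0 \<le> flux_a u v"
proof -
  have "0 \<le> - lambda * (u - v)" using lambda_nonneg assms by (simp add: mult_nonneg_nonpos)
  moreover have "0 \<le> eps_a * sigma_B * \<bar>v\<bar>^3 * v" using eps_a_pos sigma_B_pos assms by simp
  moreover have "\<bar>u\<bar>^3 * u \<le> 0" using assms by (intro mult_nonneg_nonpos) auto
  then have "2 * eps_a * sigma_B * \<bar>u\<bar>^3 * u \<le> 0"
    using eps_a_pos sigma_B_pos by (simp add: mult_nonneg_nonpos mult.assoc)
  moreover have "0 \<le> q * beta_a u" using q_pos beta_a_nonneg by simp
  ultimately show ?thesis unfolding flux_a_def by linarith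
qed

lemma flux_s_pos_at_zero:
  assumes "0 \<le> u"
  shows "0 < flux_s u 0"
  using lambda_nonneg eps_a_pos sigma_B_pos q_pos beta_s_pos[of 0] assms
  by (simp add: flux_s_def add_nonneg_pos)

lemma flux_a_bound_on_right_face:
  assumes "L-lipschitz_on UNIV beta_a" "0 \<le> mu" "0 \<le> M" "v \<in> {0..mu * M}"
  shows "flux_a M v
    \<le> q * beta_a 0 + (lambda * mu + q * L) * M - eps_a * sigma_B * (2 - mu^4) * M^4"
proof -
  have "lambda * v \<le> lambda * mu * M"
    using mult_left_mono[of v "mu * M" lambda] lambda_nonneg assms by (simp add: mult.assoc)
  moreover have "0 \<le> lambda * M" using lambda_nonneg assms by simp
  ultimately have "- lambda * (M - v) \<le> lambda * mu * M" by (simp add: algebra_simps)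
  moreover have "\<bar>v\<bar>^3 * v \<le> mu^4 * M^4"
    using power_mono[of v "mu * M" 4] assms by (simp add: power_mult_distrib flip: power_Suc2)
  then have "eps_a * sigma_B * \<bar>v\<bar>^3 * v \<le> eps_a * sigma_B * mu^4 * M^4"
    using eps_a_pos sigma_B_pos by (simp add: mult.assoc)
  moreover have "2 * eps_a * sigma_B * \<bar>M\<bar>^3 * M = 2 * eps_a * sigma_B * M^4"
    using assms by (simp add: mult.assoc flip: power_Suc2)
  moreover have "q * beta_a M \<le> q * beta_a 0 + q * L * M"
    using mult_left_mono[OF lipschitz_on_UNIV_upper_bound[OF assms(1), of M], of q] q_pos assms
    by (simp add: algebra_simps)
  ultimately have "flux_a M v \<le> lambda * mu * M + eps_a * sigma_B * mu^4 * M^4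
      - 2 * eps_a * sigma_B * M^4 + (q * beta_a 0 + q * L * M)"
    unfolding flux_a_def by linarith
  also have "\<dots> = q * beta_a 0 + (lambda * mu + q * L) * M - eps_a * sigma_B * (2 - mu^4) * M^4"
    by (simp add: algebra_simps)
  finally show ?thesis .
qed

lemma flux_s_bound_on_top_face:
  assumes "L-lipschitz_on UNIV beta_s" "0 \<le> mu" "0 \<le> M" "u \<in> {0..M}"
  shows "flux_s u (mu * M)
    \<le> q * beta_s 0 + (lambda + q * L * mu) * M - sigma_B * (mu^4 - eps_a) * M^4"
proof -
  have "lambda * u \<le> lambda * M" using lambda_nonneg assms by (simp add: mult_left_mono)
  moreover have "0 \<le> lambda * (mu * M)" using lambda_nonneg assms by simp
  ultimately have "- lambda * (mu * M - u) \<le> lambda * M" by (simp add: algebra_simps)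
  moreover have "\<bar>u\<bar>^3 * u \<le> M^4"
    using power_mono[of u M 4] assms by (simp flip: power_Suc2)
  then have "eps_a * sigma_B * \<bar>u\<bar>^3 * u \<le> eps_a * sigma_B * M^4"
    using eps_a_pos sigma_B_pos by (simp add: mult.assoc)
  moreover have "sigma_B * \<bar>mu * M\<bar>^3 * (mu * M) = sigma_B * mu^4 * M^4"
  proof -
    have "\<bar>mu * M\<bar>^3 * (mu * M) = (mu * M)^4" using assms by (simp flip: power_Suc2)
    then show ?thesis by (simp add: power_mult_distrib mult.assoc)
  qed
  moreover have "q * beta_s (mu * M) \<le> q * beta_s 0 + q * L * mu * M"
    using mult_left_mono[OF lipschitz_on_UNIV_upper_bound[OF assms(1), of "mu * M"], of q]
      q_pos assms
    by (simp add: algebra_simps)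
  ultimately have "flux_s u (mu * M) \<le> lambda * M - sigma_B * mu^4 * M^4
      + eps_a * sigma_B * M^4 + (q * beta_s 0 + q * L * mu * M)"
    unfolding flux_s_def by linarith
  also have "\<dots> = q * beta_s 0 + (lambda + q * L * mu) * M - sigma_B * (mu^4 - eps_a) * M^4"
    by (simp add: algebra_simps)
  finally show ?thesis .
qed

lemma solution_stays_in_rectangle:
  assumes "0 < gamma_a" "0 < gamma_s"
    and right: "\<forall>v\<in>{0..B}. flux_a A v < 0" and top: "\<forall>u\<in>{0..A}. flux_s u B < 0"
    and ode_a: "\<And>t. t \<in> {0..<T} \<Longrightarrow>
      (Ta has_real_derivative flux_a (Ta t) (Ts t) / gamma_a) (at t within {0..<T})"
    and ode_s: "\<And>t. t \<in> {0..<T} \<Longrightarrow>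
      (Ts has_real_derivative flux_s (Ta t) (Ts t) / gamma_s) (at t within {0..<T})"
    and "Ta 0 \<in> {0..A}" "Ts 0 \<in> {0..B}" "t \<in> {0..<T}"
  shows "Ta t \<in> {0..A} \<and> Ts t \<in> {0..B}"
proof (rule rectangle_forward_invariant[where f = "\<lambda>u v. flux_a u v / gamma_a"
      and g = "\<lambda>u v. flux_s u v / gamma_s", OF ode_a ode_s])
  show "flux_a A v / gamma_a < 0" if "v \<in> {0..B}" for v
    using right that \<open>0 < gamma_a\<close> by (simp add: divide_neg_pos)
  show "0 \<le> flux_a u v / gamma_a" if "u < 0" "v \<in> {0..B}" for u v
    using flux_a_nonneg_left[of u v] that \<open>0 < gamma_a\<close> by simp
  show "flux_s u B / gamma_s < 0" if "u \<in> {0..A}" for u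
    using top that \<open>0 < gamma_s\<close> by (simp add: divide_neg_pos)
  show "0 < flux_s u 0 / gamma_s" if "u \<in> {0..A}" for u
    using flux_s_pos_at_zero[of u] that \<open>0 < gamma_s\<close> by simp
qed (use assms in auto)

lemma eventually_flux_a_neg_on_right_face:
  assumes "L-lipschitz_on UNIV beta_a" "0 \<le> mu" "mu^4 < 2"
  shows "\<forall>\<^sub>F M in at_top. \<forall>v\<in>{0..mu * M}. flux_a M v < 0"
proof -
  have "0 < eps_a * sigma_B * (2 - mu^4)" using eps_a_pos sigma_B_pos assms(3) by simp
  then have "\<forall>\<^sub>F M in at_top.
      q * beta_a 0 + (lambda * mu + q * L) * M < eps_a * sigma_B * (2 - mu^4) * M^4"
    by (rule eventually_affine_less_quartic)
  with eventually_ge_at_top[of 0] show ?thesis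
  proof eventually_elim
    case (elim M)
    show ?case
    proof
      fix v assume "v \<in> {0..mu * M}"
      from flux_a_bound_on_right_face[OF assms(1,2) elim(1) this] elim(2)
      show "flux_a M v < 0" by linarith
    qed
  qed
qed

lemma eventually_flux_s_neg_on_top_face:
  assumes "L-lipschitz_on UNIV beta_s" "0 \<le> mu" "eps_a < mu^4"
  shows "\<forall>\<^sub>F M in at_top. \<forall>u\<in>{0..M}. flux_s u (mu * M) < 0"
proof -
  have "0 < sigma_B * (mu^4 - eps_a)" using sigma_B_pos assms(3) by simp
  then have "\<forall>\<^sub>F M in at_top.
      q * beta_s 0 + (lambda + q * L * mu) * M < sigma_B * (mu^4 - eps_a) * M^4"
    by (rule eventually_affine_less_quartic)
  with eventually_ge_at_top[of 0] show ?thesis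
  proof eventually_elim
    case (elim M)
    show ?case
    proof
      fix u assume "u \<in> {0..M}"
      from flux_s_bound_on_top_face[OF assms(1,2) elim(1) this] elim(2)
      show "flux_s u (mu * M) < 0" by linarith
    qed
  qed
qed

end

theorem lemma4p2:
  fixes gamma_a gamma_s lambda q sigma_B eps_a mu :: real
    and beta_a beta_s :: "real \<Rightarrow> real"
  assumes "gamma_a > 0" "gamma_s > 0" "lambda \<ge> 0" "q > 0" "sigma_B > 0"
    and "0 < eps_a" "eps_a < 2"
    and "\<exists>L. L-lipschitz_on UNIV beta_a" "\<exists>L. L-lipschitz_on UNIV beta_s"
    and "\<forall>x. beta_a x \<ge> 0" "\<forall>x. beta_s x > 0"
    and "root 4 eps_a < mu" "mu < root 4 2"
  shows "\<exists>M0>0. \<forall>Ma\<ge>M0. \<forall>Ta0 Ts0.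
           Ta0 \<in> {0..Ma} \<and> Ts0 \<in> {0..mu * Ma} \<longrightarrow>
           (\<forall>T>0. \<forall>Ta Ts :: real \<Rightarrow> real.
              Ta 0 = Ta0 \<and> Ts 0 = Ts0 \<and>
              (\<forall>t\<in>{0..<T}.
                 (Ta has_real_derivative
                    ((- lambda * (Ta t - Ts t) + eps_a * sigma_B * \<bar>Ts t\<bar>^3 * Ts t
                      - 2 * eps_a * sigma_B * \<bar>Ta t\<bar>^3 * Ta t + q * beta_a (Ta t)) / gamma_a))
                   (at t within {0..<T}) \<and>
                 (Ts has_real_derivative
                    ((- lambda * (Ts t - Ta t) - sigma_B * \<bar>Ts t\<bar>^3 * Ts t
                      + eps_a * sigma_B * \<bar>Ta t\<bar>^3 * Ta t + q * beta_s (Ts t)) / gamma_s))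
                   (at t within {0..<T}))
              \<longrightarrow> (\<forall>t\<in>{0..<T}. Ta t \<in> {0..Ma} \<and> Ts t \<in> {0..mu * Ma}))"
proof -
  interpret energy_balance lambda q sigma_B eps_a beta_a beta_s
    using assms by unfold_locales auto
  obtain La Ls where La: "La-lipschitz_on UNIV beta_a" and Ls: "Ls-lipschitz_on UNIV beta_s"
    using assms(8,9) by blast
  have "0 < mu" using assms(6,12) real_root_gt_zero[of 4 eps_a] by linarith
  have "eps_a < mu^4" using power_strict_mono[OF assms(12), of 4] assms(6) by simp
  have "mu^4 < 2" using power_strict_mono[OF assms(13), of 4] \<open>0 < mu\<close> by simp
  obtain N where N: "\<And>M. N \<le> M \<Longrightarrow>
      (\<forall>v\<in>{0..mu * M}. flux_a M v < 0) \<and> (\<forall>u\<in>{0..M}. flux_s u (mu * M) < 0)"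
    using eventually_conj[OF eventually_flux_a_neg_on_right_face[OF La _ \<open>mu^4 < 2\<close>]
        eventually_flux_s_neg_on_top_face[OF Ls _ \<open>eps_a < mu^4\<close>]] \<open>0 < mu\<close>
    by (auto simp: eventually_at_top_linorder)
  show ?thesis
    unfolding flux_a_def[symmetric] flux_s_def[symmetric]
  proof (intro exI[of _ "max 1 N"] conjI[of "0 < max 1 N"] allI impI ballI)
    fix Ma Ta0 Ts0 T Ta Ts t
    assume "max 1 N \<le> Ma" and "Ta0 \<in> {0..Ma} \<and> Ts0 \<in> {0..mu * Ma}"
      and "Ta 0 = Ta0 \<and> Ts 0 = Ts0 \<and> (\<forall>t\<in>{0..<T}.
        (Ta has_real_derivative flux_a (Ta t) (Ts t) / gamma_a) (at t within {0..<T}) \<and>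
        (Ts has_real_derivative flux_s (Ta t) (Ts t) / gamma_s) (at t within {0..<T}))"
      and "t \<in> {0..<T}"
    then show "Ta t \<in> {0..Ma} \<and> Ts t \<in> {0..mu * Ma}"
      using N[of Ma] by (intro solution_stays_in_rectangle[OF assms(1,2)]) auto
  qed simp
qed

end
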